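(* Let $(M,g)$ be a 4-dimensional Lorentzian manifold with Levi-Civita connection $\nabla$, and let $K_{kl}$ be a symmetric tensor with trace $K=K^p{}_p$ satisfying $$\nabla_jK_{kl}=\frac{5}{18}\nabla_jK\,g_{kl}-\frac1{18}\nabla_kK\,g_{jl}-\frac1{18}\nabla_lK\,g_{jk}.$$ Then (i) $\nabla^kK_{kl}=0$ and $K$ is a conformal Killing tensor in the sense $\nabla_jK_{kl}+\nabla_lK_{jk}+\nabla_kK_{lj}=\frac16(\nabla_jK\,g_{kl}+\nabla_lK\,g_{jk}+\nabla_kK\,g_{lj})$; (ii) $\mathscr C_{kl}=K_{kl}-\frac K3g_{kl}$ is a Codazzi tensor ($\nabla_j\mathscr C_{kl}=\nabla_k\mathscr C_{jl}$) and $K_{kl}=\mathscr C_{kl}-g_{kl}\mathscr C^p{}_p$. Consequently, if $T_{kl}$ is such that $R_{kl}-\frac12Rg_{kl}=T_{kl}+K_{kl}$, then $(g,T)$ is simultaneously a solution of conformal Killing gravity (Einstein equations sourced by $T$ plus a divergence-free conformal Killing tensor) and of Cotton gravity in Codazzi form ($R_{kl}-\frac12Rg_{kl}=T_{kl}+\mathscr C_{kl}-g_{kl}\mathscr C^p{}_p$ with $\mathscr C$ Codazzi).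
   Context: $R_{kl}$ and $R$ denote the Ricci tensor and scalar curvature of $g$. *)

theory Defs
  imports "HOL-Analysis.Analysis"
begin

text \<open>Local (chart) formalisation on an open coordinate domain U of R^4.
  Tensor fields are given by their components, indexed by the 4-element type 4.\<close>

type_synonym pt = "real ^ 4"
type_synonym scal = "pt \<Rightarrow> real"
type_synonym tens2 = "4 \<Rightarrow> 4 \<Rightarrow> pt \<Rightarrow> real"

definition pd :: "4 \<Rightarrow> scal \<Rightarrow> scal" where
  "pd j f x = frechet_derivative f (at x) (axis j 1)"

fun Ck :: "nat \<Rightarrow> pt set \<Rightarrow> scal \<Rightarrow> bool" where
  "Ck 0 U f = continuous_on U f"
| "Ck (Suc n) U f = (f differentiable_on U \<and> (\<forall>j. Ck n U (pd j f)))"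

definition smooth_fun :: "pt set \<Rightarrow> scal \<Rightarrow> bool" where
  "smooth_fun U f = (\<forall>n. Ck n U f)"

definition gmat :: "tens2 \<Rightarrow> pt \<Rightarrow> real ^ 4 ^ 4" where
  "gmat g x = (\<chi> i j. g i j x)"

definition ginv :: "tens2 \<Rightarrow> tens2" where
  "ginv g i j x = matrix_inv (gmat g x) $ i $ j"

definition lorentzian_at :: "tens2 \<Rightarrow> pt \<Rightarrow> bool" where
  "lorentzian_at g x = ((\<forall>i j. g i j x = g j i x) \<and>
     (\<exists>P :: real ^ 4 ^ 4. invertible P \<and>
        transpose P ** gmat g x ** P = (\<chi> i j. if i = j then (if i = 0 then -1 else 1) else 0)))"

definition christoffel :: "tens2 \<Rightarrow> 4 \<Rightarrow> 4 \<Rightarrow> 4 \<Rightarrow> scal" where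
  "christoffel g i k l x = (1/2) * (\<Sum>m\<in>UNIV. ginv g i m x *
      (pd k (g m l) x + pd l (g m k) x - pd m (g k l) x))"

text \<open>Levi-Civita covariant derivative of a (0,2)-tensor: cov g K j k l = nabla_j K_kl.\<close>
definition cov :: "tens2 \<Rightarrow> tens2 \<Rightarrow> 4 \<Rightarrow> 4 \<Rightarrow> 4 \<Rightarrow> scal" where
  "cov g K j k l x = pd j (K k l) x
     - (\<Sum>p\<in>UNIV. christoffel g p j k x * K p l x)
     - (\<Sum>p\<in>UNIV. christoffel g p j l x * K k p x)"

definition trace :: "tens2 \<Rightarrow> tens2 \<Rightarrow> scal" where
  "trace g K x = (\<Sum>p\<in>UNIV. \<Sum>q\<in>UNIV. ginv g p q x * K p q x)"

definition divergence :: "tens2 \<Rightarrow> tens2 \<Rightarrow> 4 \<Rightarrow> scal" where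
  "divergence g K l x = (\<Sum>k\<in>UNIV. \<Sum>j\<in>UNIV. ginv g k j x * cov g K j k l x)"

definition riemann :: "tens2 \<Rightarrow> 4 \<Rightarrow> 4 \<Rightarrow> 4 \<Rightarrow> 4 \<Rightarrow> scal" where
  "riemann g i j k l x = pd k (christoffel g i l j) x - pd l (christoffel g i k j) x
     + (\<Sum>p\<in>UNIV. christoffel g i k p x * christoffel g p l j x)
     - (\<Sum>p\<in>UNIV. christoffel g i l p x * christoffel g p k j x)"

definition ricci :: "tens2 \<Rightarrow> tens2" where
  "ricci g j l x = (\<Sum>k\<in>UNIV. riemann g k j k l x)"

definition scalar_curv :: "tens2 \<Rightarrow> scal" where
  "scalar_curv g = trace g (ricci g)"

definition einstein :: "tens2 \<Rightarrow> tens2" where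
  "einstein g k l x = ricci g k l x - (1/2) * scalar_curv g x * g k l x"

definition sym_tensor :: "pt set \<Rightarrow> tens2 \<Rightarrow> bool" where
  "sym_tensor U K = (\<forall>x\<in>U. \<forall>k l. K k l x = K l k x)"

definition smooth_tensor :: "pt set \<Rightarrow> tens2 \<Rightarrow> bool" where
  "smooth_tensor U K = (\<forall>k l. smooth_fun U (K k l))"

definition divergence_free :: "pt set \<Rightarrow> tens2 \<Rightarrow> tens2 \<Rightarrow> bool" where
  "divergence_free U g K = (\<forall>x\<in>U. \<forall>l. divergence g K l x = 0)"

definition conformal_killing :: "pt set \<Rightarrow> tens2 \<Rightarrow> tens2 \<Rightarrow> bool" where
  "conformal_killing U g K = (\<forall>x\<in>U. \<forall>j k l.
     cov g K j k l x + cov g K l j k x + cov g K k l j x =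
     (1/6) * (pd j (trace g K) x * g k l x + pd l (trace g K) x * g j k x
              + pd k (trace g K) x * g l j x))"

definition codazzi :: "pt set \<Rightarrow> tens2 \<Rightarrow> tens2 \<Rightarrow> bool" where
  "codazzi U g C = (\<forall>x\<in>U. \<forall>j k l. cov g C j k l x = cov g C k j l x)"

definition conformal_killing_gravity :: "pt set \<Rightarrow> tens2 \<Rightarrow> tens2 \<Rightarrow> bool" where
  "conformal_killing_gravity U g T = (\<exists>K. smooth_tensor U K \<and> sym_tensor U K \<and>
     divergence_free U g K \<and> conformal_killing U g K \<and>
     (\<forall>x\<in>U. \<forall>k l. einstein g k l x = T k l x + K k l x))"

definition cotton_gravity_codazzi :: "pt set \<Rightarrow> tens2 \<Rightarrow> tens2 \<Rightarrow> bool" where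
  "cotton_gravity_codazzi U g T = (\<exists>C. smooth_tensor U C \<and> sym_tensor U C \<and>
     codazzi U g C \<and>
     (\<forall>x\<in>U. \<forall>k l. einstein g k l x = T k l x + C k l x - g k l x * trace g C x))"

end

theory Submission
  imports Defs
begin

text \<open>The hypothesis expresses \<open>\<nabla>K\<close> through \<open>\<nabla>(tr K)\<close> and the metric alone, so every claim
  reduces to pointwise index gymnastics once two facts are available: the Levi-Civita
  connection is metric (\<open>\<nabla>g = 0\<close>) and \<open>g\<^sup>p\<^sub>p = 4\<close>. Contracting the hypothesis with the inverse
  metric gives \<open>\<nabla>\<^sup>kK\<^sub>k\<^sub>l = (5 - 1 - 4)/18 \<nabla>\<^sub>l(tr K) = 0\<close>, and symmetrising it over \<open>j, k, l\<close> gives the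
  conformal Killing equation. Since \<open>\<nabla>g = 0\<close>,
  \<open>\<nabla>\<^sub>j\<C>\<^sub>k\<^sub>l = -(\<nabla>\<^sub>j(tr K) g\<^sub>k\<^sub>l + \<nabla>\<^sub>k(tr K) g\<^sub>j\<^sub>l + \<nabla>\<^sub>l(tr K) g\<^sub>j\<^sub>k)/18\<close> is symmetric in \<open>j, k\<close>, and
  \<open>tr \<C> = tr K - 4 tr K/3 = -tr K/3\<close> yields \<open>K = \<C> - g tr \<C>\<close>. The analytic side is that the
  inverse metric, hence every trace, is smooth, by Cramer's rule.\<close>

section \<open>Partial derivatives\<close>

lemma has_derivative_cong_open:
  assumes "open U" "x \<in> U" "\<forall>y\<in>U. f y = h y"
  shows "(f has_derivative D) (at x) \<longleftrightarrow> (h has_derivative D) (at x)"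
  using has_derivative_transform_within_open[OF _ assms(1,2)] assms(3) by (metis (no_types))

lemma pd_cong_open:
  assumes "open U" "x \<in> U" "\<forall>y\<in>U. f y = h y"
  shows "pd j f x = pd j h x"
  unfolding pd_def frechet_derivative_def by (simp add: has_derivative_cong_open[OF assms])

lemma differentiable_cong_open:
  assumes "open U" "x \<in> U" "\<forall>y\<in>U. f y = h y"
  shows "f differentiable at x \<longleftrightarrow> h differentiable at x"
  unfolding differentiable_def by (simp add: has_derivative_cong_open[OF assms])

lemma pd_eq_has_derivative: "(f has_derivative D) (at x) \<Longrightarrow> pd j f x = D (axis j 1)"
  unfolding pd_def by (simp add: frechet_derivative_at[symmetric])

lemma pd_const: "pd j (\<lambda>x. c) x = 0"
  using pd_eq_has_derivative[OF has_derivative_const] by simp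

lemma pd_add:
  assumes "f differentiable at x" "h differentiable at x"
  shows "pd j (\<lambda>y. f y + h y) x = pd j f x + pd j h x"
  using pd_eq_has_derivative[OF has_derivative_add[OF assms[THEN frechet_derivative_works[THEN iffD1]]]]
  unfolding pd_def by simp

lemma pd_diff:
  assumes "f differentiable at x" "h differentiable at x"
  shows "pd j (\<lambda>y. f y - h y) x = pd j f x - pd j h x"
  using pd_eq_has_derivative[OF has_derivative_diff[OF assms[THEN frechet_derivative_works[THEN iffD1]]]]
  unfolding pd_def by simp

lemma pd_mult:
  assumes "f differentiable at x" "h differentiable at x"
  shows "pd j (\<lambda>y. f y * h y) x = pd j f x * h x + f x * pd j h x"
  using pd_eq_has_derivative[OF has_derivative_mult[OF assms[THEN frechet_derivative_works[THEN iffD1]]]]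
  unfolding pd_def by (simp add: algebra_simps)

lemma pd_divide_const:
  assumes "f differentiable at x"
  shows "pd j (\<lambda>y. f y / c) x = pd j f x / c"
  using pd_eq_has_derivative[OF has_derivative_mult_left[OF assms[THEN frechet_derivative_works[THEN iffD1]]],
      of j "inverse c"]
  unfolding pd_def by (simp add: divide_inverse)

lemma pd_inverse:
  assumes "f differentiable at x" "f x \<noteq> 0"
  shows "pd j (\<lambda>y. inverse (f y)) x = - (pd j f x * (inverse (f x) * inverse (f x)))"
  using pd_eq_has_derivative[OF Deriv.has_derivative_inverse[OF assms(2)
      assms(1)[THEN frechet_derivative_works[THEN iffD1]]]]
  unfolding pd_def by (simp add: algebra_simps)

section \<open>Functions of class \<open>C\<^sup>n\<close>\<close>

lemma Ck_cong:
  assumes "open U" "\<forall>y\<in>U. f y = h y"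
  shows "Ck n U f = Ck n U h"
  using assms(2)
proof (induction n arbitrary: f h)
  case 0
  then show ?case using continuous_on_cong by force
next
  case (Suc n)
  have "f differentiable_on U \<longleftrightarrow> h differentiable_on U"
    using differentiable_cong_open[OF assms(1) _ Suc.prems]
    by (simp add: differentiable_on_eq_differentiable_at[OF assms(1)])
  moreover have "Ck n U (pd j f) = Ck n U (pd j h)" for j
    using Suc.IH pd_cong_open[OF assms(1) _ Suc.prems] by blast
  ultimately show ?case by simp
qed

lemma Ck_eq_on: "open U \<Longrightarrow> Ck n U h \<Longrightarrow> \<forall>y\<in>U. f y = h y \<Longrightarrow> Ck n U f"
  using Ck_cong by blast

lemma Ck_Suc_imp_Ck: "Ck (Suc n) U f \<Longrightarrow> Ck n U f"
proof (induction n arbitrary: f)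
  case 0
  then show ?case by (simp add: differentiable_imp_continuous_on)
next
  case (Suc n)
  then show ?case by (simp only: Ck.simps) blast
qed

lemma Ck_imp_differentiable_at: "open U \<Longrightarrow> Ck (Suc n) U f \<Longrightarrow> x \<in> U \<Longrightarrow> f differentiable at x"
  by (simp add: differentiable_on_eq_differentiable_at)

lemma Ck_const: "Ck n U (\<lambda>x. c)"
proof (induction n arbitrary: c)
  case 0
  then show ?case by simp
next
  case (Suc n)
  have "pd j (\<lambda>x. c) = (\<lambda>x. 0)" for j by (rule ext) (simp add: pd_const)
  then show ?case using Suc by simp
qed

lemma Ck_add:
  assumes U: "open U"
  shows "Ck n U f \<Longrightarrow> Ck n U h \<Longrightarrow> Ck n U (\<lambda>x. f x + h x)"
proof (induction n arbitrary: f h)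
  case 0
  then show ?case by (simp add: continuous_on_add)
next
  case (Suc n)
  have "Ck n U (pd j (\<lambda>x. f x + h x))" for j
  proof -
    have "Ck n U (\<lambda>x. pd j f x + pd j h x)"
      using Suc.prems by (intro Suc.IH) simp_all
    moreover have "\<forall>y\<in>U. pd j (\<lambda>x. f x + h x) y = pd j f y + pd j h y"
      using pd_add[OF Ck_imp_differentiable_at[OF U Suc.prems(1)] Ck_imp_differentiable_at[OF U Suc.prems(2)]]
      by blast
    ultimately show ?thesis by (rule Ck_eq_on[OF U])
  qed
  moreover have "(\<lambda>x. f x + h x) differentiable_on U"
    using Suc.prems by (intro differentiable_on_add) simp_all
  ultimately show ?case by (simp only: Ck.simps) blast
qed

lemma Ck_mult:
  assumes U: "open U"
  shows "Ck n U f \<Longrightarrow> Ck n U h \<Longrightarrow> Ck n U (\<lambda>x. f x * h x)"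
proof (induction n arbitrary: f h)
  case 0
  then show ?case by (simp add: continuous_on_mult)
next
  case (Suc n)
  have "Ck n U (pd j (\<lambda>x. f x * h x))" for j
  proof -
    have "Ck n U f" "Ck n U h" "Ck n U (pd j f)" "Ck n U (pd j h)"
      using Suc.prems Ck_Suc_imp_Ck by simp_all
    then have "Ck n U (\<lambda>x. pd j f x * h x + f x * pd j h x)"
      by (intro Ck_add[OF U] Suc.IH)
    moreover have "\<forall>y\<in>U. pd j (\<lambda>x. f x * h x) y = pd j f y * h y + f y * pd j h y"
      using pd_mult[OF Ck_imp_differentiable_at[OF U Suc.prems(1)] Ck_imp_differentiable_at[OF U Suc.prems(2)]]
      by blast
    ultimately show ?thesis by (rule Ck_eq_on[OF U])
  qed
  moreover have "(\<lambda>x. f x * h x) differentiable_on U"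
    using Suc.prems by (intro differentiable_on_mult) simp_all
  ultimately show ?case by (simp only: Ck.simps) blast
qed

lemma Ck_uminus: "open U \<Longrightarrow> Ck n U f \<Longrightarrow> Ck n U (\<lambda>x. - f x)"
  using Ck_mult[OF _ Ck_const[of n U "-1"]] by simp

lemma Ck_diff: "open U \<Longrightarrow> Ck n U f \<Longrightarrow> Ck n U h \<Longrightarrow> Ck n U (\<lambda>x. f x - h x)"
  using Ck_add[OF _ _ Ck_uminus, of U n f h] by simp

lemma Ck_divide_const: "open U \<Longrightarrow> Ck n U f \<Longrightarrow> Ck n U (\<lambda>x. f x / c)"
  using Ck_mult[OF _ _ Ck_const[of n U "inverse c"]] by (simp add: divide_inverse)

lemma Ck_inverse:
  assumes U: "open U" and nz: "\<forall>x\<in>U. f x \<noteq> 0"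
  shows "Ck n U f \<Longrightarrow> Ck n U (\<lambda>x. inverse (f x))"
proof (induction n)
  case 0
  then show ?case using nz by (auto intro: continuous_on_inverse)
next
  case (Suc n)
  have inv: "Ck n U (\<lambda>x. inverse (f x))" using Suc.IH Suc.prems Ck_Suc_imp_Ck by blast
  have "Ck n U (pd j (\<lambda>x. inverse (f x)))" for j
  proof -
    have "Ck n U (pd j f)" using Suc.prems by simp
    then have "Ck n U (\<lambda>x. - (pd j f x * (inverse (f x) * inverse (f x))))"
      using Ck_uminus[OF U Ck_mult[OF U _ Ck_mult[OF U inv inv]]] by blast
    moreover have "\<forall>y\<in>U. pd j (\<lambda>x. inverse (f x)) y = - (pd j f y * (inverse (f y) * inverse (f y)))"
      using pd_inverse[OF Ck_imp_differentiable_at[OF U Suc.prems]] nz by blast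
    ultimately show ?thesis by (rule Ck_eq_on[OF U])
  qed
  moreover have "(\<lambda>x. inverse (f x)) differentiable_on U"
    using Suc.prems nz by (intro differentiable_on_inverse) auto
  ultimately show ?case by (simp only: Ck.simps) blast
qed

lemma Ck_sum:
  assumes "open U" "finite S" "\<And>i. i \<in> S \<Longrightarrow> Ck n U (f i)"
  shows "Ck n U (\<lambda>x. \<Sum>i\<in>S. f i x)"
  using assms(2,3)
proof (induction S rule: finite_induct)
  case empty
  then show ?case using Ck_const by simp
next
  case (insert i S)
  then show ?case using Ck_add[OF assms(1)] by simp
qed

lemma Ck_prod:
  assumes "open U" "finite S" "\<And>i. i \<in> S \<Longrightarrow> Ck n U (f i)"
  shows "Ck n U (\<lambda>x. \<Prod>i\<in>S. f i x)"
  using assms(2,3)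
proof (induction S rule: finite_induct)
  case empty
  then show ?case using Ck_const by simp
next
  case (insert i S)
  then show ?case using Ck_mult[OF assms(1)] by simp
qed

lemma Ck_det:
  assumes "open U" "\<And>r c. Ck n U (M r c)"
  shows "Ck n U (\<lambda>x. det ((\<chi> r c. M r c x) :: real^'n^'n))"
  unfolding det_def
  by (simp, intro Ck_sum[OF assms(1)] Ck_mult[OF assms(1)] Ck_prod[OF assms(1)] Ck_const assms(2))
     (simp_all add: finite_permutations)

section \<open>The inverse metric\<close>

lemma matrix_inv_right_left:
  fixes A :: "'a::semiring_1^'n^'m"
  assumes "invertible A"
  shows "A ** matrix_inv A = mat 1" "matrix_inv A ** A = mat 1"
proof -
  obtain A' where "A ** A' = mat 1 \<and> A' ** A = mat 1" using assms unfolding invertible_def by blast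
  then have "A ** matrix_inv A = mat 1 \<and> matrix_inv A ** A = mat 1"
    unfolding matrix_inv_def by (rule someI)
  then show "A ** matrix_inv A = mat 1" "matrix_inv A ** A = mat 1" by simp_all
qed

lemma matrix_inv_cramer:
  fixes A :: "real^'n^'n"
  assumes "invertible A"
  shows "matrix_inv A $ i $ j = det (\<chi> r c. if c = i then (if r = j then 1 else 0) else A $ r $ c) / det A"
proof -
  have "A *v (matrix_inv A *v axis j 1) = axis j 1"
    by (simp add: matrix_vector_mul_assoc matrix_inv_right_left[OF assms])
  then have "matrix_inv A *v axis j 1 = (\<chi> k. det (\<chi> r c. if c = k then axis j 1 $ r else A $ r $ c) / det A)"
    using cramer assms invertible_det_nz by blast
  then have "(matrix_inv A *v axis j 1) $ i = det (\<chi> r c. if c = i then axis j 1 $ r else A $ r $ c) / det A"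
    by simp
  moreover have "(matrix_inv A *v axis j 1) $ i = matrix_inv A $ i $ j"
    by (simp add: matrix_vector_mult_basis column_def)
  moreover have "(\<chi> r c. if c = i then axis j 1 $ r else A $ r $ c)
      = (\<chi> r c. if c = i then (if r = j then 1 else 0) else A $ r $ c)"
    by (simp add: axis_def vec_eq_iff)
  ultimately show ?thesis by simp
qed

lemma lorentzian_at_invertible:
  assumes "lorentzian_at g x"
  shows "invertible (gmat g x)"
proof -
  let ?D = "(\<chi> i j. if i = j then (if i = 0 then -1 else 1) else 0) :: real^4^4"
  obtain P :: "real^4^4" where "invertible P" "transpose P ** gmat g x ** P = ?D"
    using assms unfolding lorentzian_at_def by blast
  moreover have "det ?D \<noteq> 0"
    by (subst det_diagonal) (simp_all add: prod_zero_iff)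
  ultimately have "det (transpose P ** gmat g x ** P) \<noteq> 0" by simp
  then show ?thesis by (simp add: det_mul invertible_det_nz)
qed

lemma ginv_right:
  assumes "lorentzian_at g x"
  shows "(\<Sum>p\<in>UNIV. g a p x * ginv g p b x) = (if a = b then 1 else 0)"
proof -
  have "(gmat g x ** matrix_inv (gmat g x)) $ a $ b = mat 1 $ a $ b"
    using matrix_inv_right_left(1)[OF lorentzian_at_invertible[OF assms]] by simp
  then show ?thesis by (simp add: matrix_matrix_mult_def mat_def gmat_def ginv_def)
qed

lemma ginv_left:
  assumes "lorentzian_at g x"
  shows "(\<Sum>p\<in>UNIV. ginv g a p x * g p b x) = (if a = b then 1 else 0)"
proof -
  have "(matrix_inv (gmat g x) ** gmat g x) $ a $ b = mat 1 $ a $ b"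
    using matrix_inv_right_left(2)[OF lorentzian_at_invertible[OF assms]] by simp
  then show ?thesis by (simp add: matrix_matrix_mult_def mat_def gmat_def ginv_def)
qed

lemma Ck_ginv:
  assumes U: "open U" and g: "\<And>k l. Ck n U (g k l)" and lor: "\<forall>x\<in>U. lorentzian_at g x"
  shows "Ck n U (ginv g i j)"
proof -
  let ?N = "\<lambda>x. det ((\<chi> r c. if c = i then (if r = j then 1 else 0) else g r c x) :: real^4^4)"
  let ?D = "\<lambda>x. det ((\<chi> r c. g r c x) :: real^4^4)"
  have "Ck n U (\<lambda>x. if c = i then (if r = j then 1 else 0) else g r c x)" for r c
    by (cases "c = i") (simp_all add: Ck_const g)
  then have "Ck n U ?N" by (rule Ck_det[OF U])
  moreover have "Ck n U ?D" by (rule Ck_det[OF U g])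
  moreover have "\<forall>x\<in>U. ?D x \<noteq> 0"
    using lor lorentzian_at_invertible invertible_det_nz unfolding gmat_def by blast
  ultimately have "Ck n U (\<lambda>x. ?N x * inverse (?D x))"
    by (intro Ck_mult[OF U] Ck_inverse[OF U])
  moreover have "\<forall>x\<in>U. ginv g i j x = ?N x * inverse (?D x)"
  proof
    fix x assume "x \<in> U"
    have inv: "invertible ((\<chi> r c. g r c x) :: real^4^4)"
      using lorentzian_at_invertible lor \<open>x \<in> U\<close> unfolding gmat_def by blast
    have eq:  "((\<chi> r c. if c = i then (if r = j then 1 else 0) else ((\<chi> r c. g r c x) :: real^4^4) $ r $ c) :: real^4^4)
        = (\<chi> r c. if c = i then (if r = j then 1 else 0) else g r c x)"
      by (simp add: vec_eq_iff)
    show "ginv g i j x = ?N x * inverse (?D x)"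
      unfolding ginv_def gmat_def matrix_inv_cramer[OF inv] eq by (simp add: divide_inverse)
  qed
  ultimately show ?thesis by (rule Ck_eq_on[OF U])
qed

lemma Ck_trace:
  assumes U: "open U" and g: "\<And>k l. Ck n U (g k l)" and lor: "\<forall>x\<in>U. lorentzian_at g x"
    and K: "\<And>k l. Ck n U (K k l)"
  shows "Ck n U (trace g K)"
proof -
  have "Ck n U (\<lambda>x. ginv g p q x * K p q x)" for p q
    by (rule Ck_mult[OF U Ck_ginv[OF U g lor] K])
  then have "Ck n U (\<lambda>x. \<Sum>p\<in>UNIV. \<Sum>q\<in>UNIV. ginv g p q x * K p q x)"
    by (intro Ck_sum[OF U]) simp_all
  then show ?thesis unfolding trace_def[abs_def] .
qed

section \<open>Contractions with an inverse metric\<close>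

lemma sum_inverse_metric_lower:
  fixes G B :: "'n::finite \<Rightarrow> 'n \<Rightarrow> real"
  assumes GB: "\<And>a b. (\<Sum>p\<in>UNIV. G a p * B p b) = (if a = b then 1 else 0)"
  shows "(\<Sum>p\<in>UNIV. (\<Sum>m\<in>UNIV. B p m * A m) * G q p) = A q"
proof -
  have "(\<Sum>p\<in>UNIV. (\<Sum>m\<in>UNIV. B p m * A m) * G q p) = (\<Sum>p\<in>UNIV. \<Sum>m\<in>UNIV. A m * (G q p * B p m))"
    by (simp add: sum_distrib_left sum_distrib_right mult_ac)
  also have "\<dots> = (\<Sum>m\<in>UNIV. A m * (\<Sum>p\<in>UNIV. G q p * B p m))"
    by (subst sum.swap) (simp add: sum_distrib_left)
  also have "\<dots> = A q" by (simp add: GB if_distrib cong: if_cong)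
  finally show ?thesis .
qed

lemma sum_inverse_metric_trace:
  fixes G B :: "'n::finite \<Rightarrow> 'n \<Rightarrow> real"
  assumes BG: "\<And>a b. (\<Sum>p\<in>UNIV. B a p * G p b) = (if a = b then 1 else 0)"
  shows "(\<Sum>p\<in>UNIV. \<Sum>q\<in>UNIV. B p q * G q p) = CARD('n)"
  by (simp add: BG)

lemma sum_inverse_metric_contract:
  fixes G B :: "'n::finite \<Rightarrow> 'n \<Rightarrow> real"
  assumes sym: "\<And>i j. G i j = G j i"
    and GB: "\<And>a b. (\<Sum>p\<in>UNIV. G a p * B p b) = (if a = b then 1 else 0)"
    and BG: "\<And>a b. (\<Sum>p\<in>UNIV. B a p * G p b) = (if a = b then 1 else 0)"
  shows "(\<Sum>k\<in>UNIV. \<Sum>j\<in>UNIV. B k j * (\<alpha> * a j * G k l + \<beta> * a k * G j l + \<gamma> * a l * G j k))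
    = (\<alpha> + \<beta> + \<gamma> * CARD('n)) * a l"
proof -
  have "(\<Sum>k\<in>UNIV. \<Sum>j\<in>UNIV. B k j * (\<alpha> * a j * G k l)) = (\<Sum>k\<in>UNIV. (\<Sum>j\<in>UNIV. B k j * (\<alpha> * a j)) * G l k)"
    by (simp add: sum_distrib_left sum_distrib_right sym[of _ l] mult_ac)
  also have "\<dots> = \<alpha> * a l" by (rule sum_inverse_metric_lower[OF GB])
  finally have \<alpha>: "(\<Sum>k\<in>UNIV. \<Sum>j\<in>UNIV. B k j * (\<alpha> * a j * G k l)) = \<alpha> * a l" .
  have "(\<Sum>k\<in>UNIV. \<Sum>j\<in>UNIV. B k j * (\<beta> * a k * G j l)) = (\<Sum>k\<in>UNIV. \<beta> * a k * (\<Sum>j\<in>UNIV. B k j * G j l))"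
    by (simp add: sum_distrib_left mult_ac)
  then have \<beta>: "(\<Sum>k\<in>UNIV. \<Sum>j\<in>UNIV. B k j * (\<beta> * a k * G j l)) = \<beta> * a l"
    by (simp add: BG if_distrib cong: if_cong)
  have "(\<Sum>k\<in>UNIV. \<Sum>j\<in>UNIV. B k j * (\<gamma> * a l * G j k)) = \<gamma> * a l * (\<Sum>k\<in>UNIV. \<Sum>j\<in>UNIV. B k j * G j k)"
    by (simp add: sum_distrib_left mult_ac)
  then have \<gamma>: "(\<Sum>k\<in>UNIV. \<Sum>j\<in>UNIV. B k j * (\<gamma> * a l * G j k)) = \<gamma> * CARD('n) * a l"
    by (simp add: sum_inverse_metric_trace[OF BG])
  have "(\<Sum>k\<in>UNIV. \<Sum>j\<in>UNIV. B k j * (\<alpha> * a j * G k l + \<beta> * a k * G j l + \<gamma> * a l * G j k))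
    = (\<Sum>k\<in>UNIV. \<Sum>j\<in>UNIV. B k j * (\<alpha> * a j * G k l)) + (\<Sum>k\<in>UNIV. \<Sum>j\<in>UNIV. B k j * (\<beta> * a k * G j l))
      + (\<Sum>k\<in>UNIV. \<Sum>j\<in>UNIV. B k j * (\<gamma> * a l * G j k))"
    by (simp only: distrib_left sum.distrib)
  also have "\<dots> = (\<alpha> + \<beta> + \<gamma> * CARD('n)) * a l"
    by (simp only: \<alpha> \<beta> \<gamma> distrib_right)
  finally show ?thesis .
qed

locale lorentzian_chart =
  fixes U :: "pt set" and g :: tens2
  assumes open_U: "open U"
    and smooth_metric: "smooth_tensor U g"
    and lorentzian: "\<forall>x\<in>U. lorentzian_at g x"
begin

lemma metric_sym: "x \<in> U \<Longrightarrow> g i j x = g j i x"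
  using lorentzian unfolding lorentzian_at_def by blast

lemma Ck_metric: "Ck n U (g k l)"
  using smooth_metric unfolding smooth_tensor_def smooth_fun_def by blast

lemma smooth_trace: "smooth_tensor U K \<Longrightarrow> smooth_fun U (trace g K)"
  unfolding smooth_tensor_def smooth_fun_def using Ck_trace[OF open_U Ck_metric lorentzian] by blast

lemma sum_christoffel_lower:
  assumes "x \<in> U"
  shows "(\<Sum>p\<in>UNIV. christoffel g p a b x * g q p x) = (1/2) * (pd a (g q b) x + pd b (g q a) x - pd q (g a b) x)"
proof -
  have "(\<Sum>p\<in>UNIV. christoffel g p a b x * g q p x)
      = (1/2) * (\<Sum>p\<in>UNIV. (\<Sum>m\<in>UNIV. ginv g p m x * (pd a (g m b) x + pd b (g m a) x - pd m (g a b) x)) * g q p x)"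
    by (simp add: christoffel_def sum_distrib_left sum_distrib_right mult_ac)
  also have "\<dots> = (1/2) * (pd a (g q b) x + pd b (g q a) x - pd q (g a b) x)"
    using sum_inverse_metric_lower[OF ginv_right[OF lorentzian[rule_format, OF assms]]] by simp
  finally show ?thesis .
qed

lemma cov_metric:
  assumes x: "x \<in> U"
  shows "cov g g j k l x = 0"
proof -
  have dsym: "pd a (g b c) x = pd a (g c b) x" for a b c
    using pd_cong_open[OF open_U x] metric_sym by blast
  have "cov g g j k l x = pd j (g k l) x - (\<Sum>p\<in>UNIV. christoffel g p j k x * g l p x)
      - (\<Sum>p\<in>UNIV. christoffel g p j l x * g k p x)"
    unfolding cov_def using metric_sym[OF x, of _ l] by simp
  also have "\<dots> = 0"
    unfolding sum_christoffel_lower[OF x] using dsym[of j l k] dsym[of k l j] dsym[of l j k] by (simp add: field_simps)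
  finally show ?thesis .
qed

lemma trace_metric: "x \<in> U \<Longrightarrow> trace g g x = 4"
  using sum_inverse_metric_trace[OF ginv_left[OF lorentzian[rule_format]]] metric_sym
  by (simp add: trace_def)

lemma cov_sub_scaled_metric:
  assumes x: "x \<in> U" and K: "\<And>k l. K k l differentiable at x" and t: "t differentiable at x"
  shows "cov g (\<lambda>k l y. K k l y - t y * g k l y) j k l x = cov g K j k l x - pd j t x * g k l x"
proof -
  have g: "g k l differentiable at x" for k l
    by (rule Ck_imp_differentiable_at[OF open_U Ck_metric x])
  have "cov g (\<lambda>k l y. K k l y - t y * g k l y) j k l x
      = cov g K j k l x - pd j t x * g k l x - t x * cov g g j k l x"
    unfolding cov_def pd_diff[OF K differentiable_mult[OF t g]] pd_mult[OF t g]
    by (simp add: sum_subtractf right_diff_distrib sum_distrib_left algebra_simps)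
  then show ?thesis by (simp add: cov_metric[OF x])
qed

lemma trace_sub_scaled_metric:
  assumes "x \<in> U"
  shows "trace g (\<lambda>k l y. K k l y - t y * g k l y) x = trace g K x - 4 * t x"
proof -
  have "trace g (\<lambda>k l y. K k l y - t y * g k l y) x = trace g K x - t x * trace g g x"
    unfolding trace_def by (simp add: right_diff_distrib sum_subtractf sum_distrib_left mult_ac)
  then show ?thesis by (simp add: trace_metric[OF assms])
qed

lemma smooth_sub_scaled_metric:
  assumes "smooth_tensor U K" "smooth_fun U t"
  shows "smooth_tensor U (\<lambda>k l x. K k l x - t x * g k l x)"
  using assms Ck_diff[OF open_U] Ck_mult[OF open_U _ Ck_metric]
  unfolding smooth_tensor_def smooth_fun_def by blast

end

definition cov_determined_by_trace :: "pt set \<Rightarrow> tens2 \<Rightarrow> tens2 \<Rightarrow> bool" where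
  "cov_determined_by_trace U g K \<longleftrightarrow> (\<forall>x\<in>U. \<forall>j k l. cov g K j k l x =
      (5/18) * pd j (trace g K) x * g k l x
    - (1/18) * pd k (trace g K) x * g j l x
    - (1/18) * pd l (trace g K) x * g j k x)"

lemma cov_determined_by_traceD:
  "cov_determined_by_trace U g K \<Longrightarrow> x \<in> U \<Longrightarrow> cov g K j k l x =
      (5/18) * pd j (trace g K) x * g k l x
    - (1/18) * pd k (trace g K) x * g j l x
    - (1/18) * pd l (trace g K) x * g j k x"
  unfolding cov_determined_by_trace_def by blast

context lorentzian_chart
begin

lemma divergence_free_if_cov_determined_by_trace:
  assumes "cov_determined_by_trace U g K"
  shows "divergence_free U g K"
  unfolding divergence_free_def
proof (intro ballI allI)
  fix x l assume x: "x \<in> U"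
  let ?a = "\<lambda>j. pd j (trace g K) x"
  have "divergence g K l x = (\<Sum>k\<in>UNIV. \<Sum>j\<in>UNIV. ginv g k j x *
      ((5/18) * ?a j * g k l x + (-1/18) * ?a k * g j l x + (-1/18) * ?a l * g j k x))"
    unfolding divergence_def cov_determined_by_traceD[OF assms x] by simp
  also have "\<dots> = (5/18 + (-1/18) + (-1/18) * CARD(4)) * ?a l"
    using lorentzian x by (intro sum_inverse_metric_contract metric_sym ginv_right ginv_left) auto
  finally show "divergence g K l x = 0" by simp
qed

lemma conformal_killing_if_cov_determined_by_trace:
  assumes "cov_determined_by_trace U g K"
  shows "conformal_killing U g K"
  unfolding conformal_killing_def
proof (intro ballI allI)
  fix x j k l assume x: "x \<in> U"
  have "g j l x = g l j x" "g l k x = g k l x" "g k j x = g j k x"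
    using metric_sym[OF x] by auto
  then show "cov g K j k l x + cov g K l j k x + cov g K k l j x =
      (1/6) * (pd j (trace g K) x * g k l x + pd l (trace g K) x * g j k x
        + pd k (trace g K) x * g l j x)"
    unfolding cov_determined_by_traceD[OF assms x] by (simp add: field_simps)
qed

lemma codazzi_if_cov_determined_by_trace:
  assumes K: "smooth_tensor U K" and cov_K: "cov_determined_by_trace U g K"
  shows "codazzi U g (\<lambda>k l x. K k l x - trace g K x / 3 * g k l x)"
  unfolding codazzi_def
proof (intro ballI allI)
  fix x j k l assume x: "x \<in> U"
  have "K k l differentiable at x" for k l
    using K Ck_imp_differentiable_at[OF open_U _ x] unfolding smooth_tensor_def smooth_fun_def by blast
  moreover have tr: "trace g K differentiable at x"
    using smooth_trace[OF K] Ck_imp_differentiable_at[OF open_U _ x] unfolding smooth_fun_def by blast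
  ultimately have cov_C: "cov g (\<lambda>k l x. K k l x - trace g K x / 3 * g k l x) j k l x
      = cov g K j k l x - pd j (trace g K) x / 3 * g k l x" for j k l
    using cov_sub_scaled_metric[OF x, of K "\<lambda>y. trace g K y / 3"] pd_divide_const[OF tr] by simp
  have "g k j x = g j k x" using metric_sym[OF x] .
  then show "cov g (\<lambda>k l x. K k l x - trace g K x / 3 * g k l x) j k l x
      = cov g (\<lambda>k l x. K k l x - trace g K x / 3 * g k l x) k j l x"
    unfolding cov_C cov_determined_by_traceD[OF cov_K x] by (simp add: field_simps)
qed

end

theorem mainTheorem9:
  fixes U :: "(real ^ 4) set" and g K :: tens2
  assumes U: "open U"
    and g_smooth: "smooth_tensor U g"
    and g_lor: "\<forall>x\<in>U. lorentzian_at g x"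
    and K_smooth: "smooth_tensor U K"
    and K_sym: "sym_tensor U K"
    and hyp: "\<forall>x\<in>U. \<forall>j k l. cov g K j k l x =
        (5/18) * pd j (trace g K) x * g k l x
      - (1/18) * pd k (trace g K) x * g j l x
      - (1/18) * pd l (trace g K) x * g j k x"
  defines "C \<equiv> (\<lambda>k l x. K k l x - trace g K x / 3 * g k l x)"
  shows "divergence_free U g K \<and> conformal_killing U g K
     \<and> codazzi U g C
     \<and> (\<forall>x\<in>U. \<forall>k l. K k l x = C k l x - g k l x * trace g C x)
     \<and> (\<forall>T. (\<forall>x\<in>U. \<forall>k l. einstein g k l x = T k l x + K k l x) \<longrightarrow>
            conformal_killing_gravity U g T \<and> cotton_gravity_codazzi U g T)"
proof -
  interpret lorentzian_chart U g
    using U g_smooth g_lor by unfold_locales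
  have cov_K: "cov_determined_by_trace U g K"
    using hyp unfolding cov_determined_by_trace_def .
  have K_C: "\<forall>x\<in>U. \<forall>k l. K k l x = C k l x - g k l x * trace g C x"
    using trace_sub_scaled_metric[of _ K "\<lambda>x. trace g K x / 3"] unfolding C_def by simp
  have "smooth_fun U (\<lambda>x. trace g K x / 3)"
    using smooth_trace[OF K_smooth] Ck_divide_const[OF U] unfolding smooth_fun_def by blast
  then have "smooth_tensor U C"
    unfolding C_def by (rule smooth_sub_scaled_metric[OF K_smooth])
  moreover have "sym_tensor U C"
    using K_sym metric_sym unfolding sym_tensor_def C_def by simp
  moreover note divergence_free_if_cov_determined_by_trace[OF cov_K]
    conformal_killing_if_cov_determined_by_trace[OF cov_K]
    codazzi_if_cov_determined_by_trace[OF K_smooth cov_K, folded C_def]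
  ultimately show ?thesis
    using K_smooth K_sym K_C
    unfolding conformal_killing_gravity_def cotton_gravity_codazzi_def by (metis add_diff_eq)
qed

end
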